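(* Let $G$ be a finite group, $D$ a Dedekind domain, $A$ a $DG$-module and $B$ a $DG$-submodule of $A$ such that: (i) $B=\bigoplus_{\lambda\in\Lambda}B_\lambda$ with each $B_\lambda$ a simple $DG$-submodule; (ii) $A/B$ is a simple $DG$-module and $A/B\not\cong_{DG}B_\lambda$ for all $\lambda\in\Lambda$; (iii) $\mathrm{Ann}_D(B)=\mathrm{Ann}_D(A/B)=P$ is a maximal ideal of $D$; (iv) $\mathrm{char}(D/P)=0$. Then there exists a $DG$-submodule $K$ of $A$ with $A=B\oplus K$. *)

theory Defs
  imports "HOL-Algebra.Algebra"
begin

text \<open>Integral closedness
is written out without the fraction field: if the fraction a/b (b nonzero) is a
root of a monic polynomial with coefficients in D, then b divides a.\<close>
definition dedekind_domain :: "('d, 'e) ring_scheme \<Rightarrow> bool" where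
  "dedekind_domain D \<longleftrightarrow>
     domain D \<and> noetherian_ring D \<and>
     (\<forall>P. primeideal P D \<and> P \<noteq> {\<zero>\<^bsub>D\<^esub>} \<longrightarrow> maximalideal P D) \<and>
     (\<forall>a \<in> carrier D. \<forall>b \<in> carrier D. \<forall>n::nat. \<forall>c.
        b \<noteq> \<zero>\<^bsub>D\<^esub> \<and> n > 0 \<and> c \<in> {..<n} \<rightarrow> carrier D \<and>
        a [^]\<^bsub>D\<^esub> n \<oplus>\<^bsub>D\<^esub>
          (\<Oplus>\<^bsub>D\<^esub>i\<in>{..<n}. c i \<otimes>\<^bsub>D\<^esub> a [^]\<^bsub>D\<^esub> i \<otimes>\<^bsub>D\<^esub> b [^]\<^bsub>D\<^esub> (n - i))
          = \<zero>\<^bsub>D\<^esub>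
        \<longrightarrow> (\<exists>d \<in> carrier D. a = b \<otimes>\<^bsub>D\<^esub> d))"

definition char_zero_ring :: "('a, 'b) ring_scheme \<Rightarrow> bool" where
  "char_zero_ring R \<longleftrightarrow> (\<forall>n::nat. n > 0 \<longrightarrow> [n] \<cdot>\<^bsub>R\<^esub> \<one>\<^bsub>R\<^esub> \<noteq> \<zero>\<^bsub>R\<^esub>)"

text \<open>A DG-module: a D-module M together with a G-action \<phi> on carrier M by
D-linear maps (equivalently, a module over the group ring DG).\<close>
definition DG_module ::
  "('d, 'e) ring_scheme \<Rightarrow> ('g, 'h) monoid_scheme \<Rightarrow> ('d, 'm) module \<Rightarrow> ('g \<Rightarrow> 'm \<Rightarrow> 'm) \<Rightarrow> bool" where
  "DG_module D G M \<phi> \<longleftrightarrow>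
     module D M \<and> group G \<and> group_action G (carrier M) \<phi> \<and>
     (\<forall>g \<in> carrier G. \<forall>x \<in> carrier M. \<forall>y \<in> carrier M.
        \<phi> g (x \<oplus>\<^bsub>M\<^esub> y) = \<phi> g x \<oplus>\<^bsub>M\<^esub> \<phi> g y) \<and>
     (\<forall>g \<in> carrier G. \<forall>a \<in> carrier D. \<forall>x \<in> carrier M.
        \<phi> g (a \<odot>\<^bsub>M\<^esub> x) = a \<odot>\<^bsub>M\<^esub> \<phi> g x)"

definition DG_submodule ::
  "('d, 'e) ring_scheme \<Rightarrow> ('g, 'h) monoid_scheme \<Rightarrow> ('d, 'm) module \<Rightarrow> ('g \<Rightarrow> 'm \<Rightarrow> 'm) \<Rightarrow> 'm set \<Rightarrow> bool" where
  "DG_submodule D G M \<phi> N \<longleftrightarrow>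
     submodule N D M \<and> (\<forall>g \<in> carrier G. \<forall>x \<in> N. \<phi> g x \<in> N)"

definition simple_DG_submodule ::
  "('d, 'e) ring_scheme \<Rightarrow> ('g, 'h) monoid_scheme \<Rightarrow> ('d, 'm) module \<Rightarrow> ('g \<Rightarrow> 'm \<Rightarrow> 'm) \<Rightarrow> 'm set \<Rightarrow> bool" where
  "simple_DG_submodule D G M \<phi> S \<longleftrightarrow>
     DG_submodule D G M \<phi> S \<and> S \<noteq> {\<zero>\<^bsub>M\<^esub>} \<and>
     (\<forall>N. DG_submodule D G M \<phi> N \<and> N \<subseteq> S \<longrightarrow> N = {\<zero>\<^bsub>M\<^esub>} \<or> N = S)"

text \<open>The quotient (carrier M)/B is a simple DG-module: B is proper and the only
DG-submodules between B and carrier M are B and carrier M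
(correspondence theorem).\<close>
definition simple_DG_quotient ::
  "('d, 'e) ring_scheme \<Rightarrow> ('g, 'h) monoid_scheme \<Rightarrow> ('d, 'm) module \<Rightarrow> ('g \<Rightarrow> 'm \<Rightarrow> 'm) \<Rightarrow> 'm set \<Rightarrow> bool" where
  "simple_DG_quotient D G M \<phi> B \<longleftrightarrow>
     B \<noteq> carrier M \<and>
     (\<forall>N. DG_submodule D G M \<phi> N \<and> B \<subseteq> N \<and> N \<subseteq> carrier M \<longrightarrow> N = B \<or> N = carrier M)"

text \<open>(carrier M)/B is DG-isomorphic to the DG-submodule S: there is a surjective
DG-homomorphism carrier M \<rightarrow> S with kernel B (first isomorphism theorem).\<close>
definition quotient_DG_iso ::
  "('d, 'e) ring_scheme \<Rightarrow> ('g, 'h) monoid_scheme \<Rightarrow> ('d, 'm) module \<Rightarrow> ('g \<Rightarrow> 'm \<Rightarrow> 'm) \<Rightarrow> 'm set \<Rightarrow> 'm set \<Rightarrow> bool" where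
  "quotient_DG_iso D G M \<phi> B S \<longleftrightarrow>
     (\<exists>f. f ` carrier M = S \<and>
        (\<forall>x \<in> carrier M. \<forall>y \<in> carrier M. f (x \<oplus>\<^bsub>M\<^esub> y) = f x \<oplus>\<^bsub>M\<^esub> f y) \<and>
        (\<forall>a \<in> carrier D. \<forall>x \<in> carrier M. f (a \<odot>\<^bsub>M\<^esub> x) = a \<odot>\<^bsub>M\<^esub> f x) \<and>
        (\<forall>g \<in> carrier G. \<forall>x \<in> carrier M. f (\<phi> g x) = \<phi> g (f x)) \<and>
        {x \<in> carrier M. f x = \<zero>\<^bsub>M\<^esub>} = B)"

definition ann :: "('d, 'e) ring_scheme \<Rightarrow> ('d, 'm) module \<Rightarrow> 'm set \<Rightarrow> 'd set" where
  "ann D M N = {a \<in> carrier D. \<forall>x \<in> N. a \<odot>\<^bsub>M\<^esub> x = \<zero>\<^bsub>M\<^esub>}"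

definition ann_quot :: "('d, 'e) ring_scheme \<Rightarrow> ('d, 'm) module \<Rightarrow> 'm set \<Rightarrow> 'd set" where
  "ann_quot D M B = {a \<in> carrier D. \<forall>x \<in> carrier M. a \<odot>\<^bsub>M\<^esub> x \<in> B}"

definition internal_direct_sum :: "('d, 'm) module \<Rightarrow> 'l set \<Rightarrow> ('l \<Rightarrow> 'm set) \<Rightarrow> 'm set \<Rightarrow> bool" where
  "internal_direct_sum M L Bf B \<longleftrightarrow>
     B = {finsum M x S | x S. finite S \<and> S \<subseteq> L \<and> (\<forall>l \<in> S. x l \<in> Bf l)} \<and>
     (\<forall>S x. finite S \<and> S \<subseteq> L \<and> (\<forall>l \<in> S. x l \<in> Bf l) \<and> finsum M x S = \<zero>\<^bsub>M\<^esub>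
        \<longrightarrow> (\<forall>l \<in> S. x l = \<zero>\<^bsub>M\<^esub>))"

end

theory Submission
  imports Defs
begin

text \<open>
  The annihilating ideal P already kills all of A.  Indeed, for p \<in> P we have p A \<subseteq> B and
  p B = 0; if p A \<noteq> 0, then multiplication by p followed by the projection to a suitable summand
  B_\<lambda> is a nonzero DG-map A \<rightarrow> B_\<lambda> whose kernel contains B, hence (both A/B and
  B_\<lambda> being simple) an isomorphism A/B \<cong> B_\<lambda>, which is excluded.  So A is a vector space
  over the field D/P, and |G| is invertible on it because D/P has characteristic 0.

  Pick a \<notin> B.  Enlarging a D-linear complement of B one cyclic submodule at a time, we find a
  D-submodule C with B \<inter> C = 0 such that B + C contains the whole (finite) orbit of a; the
  elements whose orbit lies in B + C form a DG-submodule strictly containing B, so B + C = A.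
  The projection onto B along C, averaged over G (Maschke's trick), is a DG-linear projection
  onto B, and its kernel is the required complement K.
\<close>

section \<open>Submodules, sums of submodules and linear maps\<close>

lemma set_add_memI: "h \<in> H \<Longrightarrow> k \<in> K \<Longrightarrow> h \<oplus>\<^bsub>G\<^esub> k \<in> H <+>\<^bsub>G\<^esub> K"
  unfolding set_add_def' by blast

lemma set_add_memE:
  assumes "x \<in> H <+>\<^bsub>G\<^esub> K"
  obtains h k where "h \<in> H" "k \<in> K" "x = h \<oplus>\<^bsub>G\<^esub> k"
  using assms unfolding set_add_def' by blast

context module
begin

lemma submodule_zero_closed:
  assumes "submodule H R M"
  shows "\<zero>\<^bsub>M\<^esub> \<in> H"
  using subgroup.one_closed[OF submodule.axioms(1)[OF assms]] by simp

lemma submodule_finsum_closed: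
  assumes "submodule H R M" and "finite S" and "f \<in> S \<rightarrow> H"
  shows "finsum M f S \<in> H"
  using assms(2,3)
proof (induction S rule: finite_induct)
  case empty
  then show ?case using submodule_zero_closed[OF assms(1)] by simp
next
  case (insert s S)
  have "H \<subseteq> carrier M" using submoduleE(1)[OF assms(1)] .
  with insert have "f \<in> S \<rightarrow> carrier M" "f s \<in> carrier M" by auto
  with insert show ?case using submoduleE(5)[OF assms(1)] by (simp add: M.finsum_insert)
qed

lemma submodule_set_add:
  assumes H: "submodule H R M" and K: "submodule K R M"
  shows "submodule (H <+>\<^bsub>M\<^esub> K) R M"
proof (rule submodule.intro)
  show "subgroup (H <+>\<^bsub>M\<^esub> K) (add_monoid M)"
    using add_additive_subgroups[of H K] submodule.axioms(1)[OF H] submodule.axioms(1)[OF K]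
    unfolding additive_subgroup_def by blast
  show "submodule_axioms (H <+>\<^bsub>M\<^esub> K) R M"
  proof
    fix a x assume a: "a \<in> carrier R" and x: "x \<in> H <+>\<^bsub>M\<^esub> K"
    obtain h k where hk: "h \<in> H" "k \<in> K" "x = h \<oplus>\<^bsub>M\<^esub> k"
      using x by (rule set_add_memE)
    then have "a \<odot>\<^bsub>M\<^esub> x = a \<odot>\<^bsub>M\<^esub> h \<oplus>\<^bsub>M\<^esub> a \<odot>\<^bsub>M\<^esub> k"
      using a submoduleE(1)[OF H] submoduleE(1)[OF K] by (simp add: smult_r_distr subsetD)
    then show "a \<odot>\<^bsub>M\<^esub> x \<in> H <+>\<^bsub>M\<^esub> K"
      using a hk submoduleE(4)[OF H] submoduleE(4)[OF K] by (simp add: set_add_memI)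
  qed
qed

lemma submodule_set_add_upper:
  assumes H: "submodule H R M" and K: "submodule K R M"
  shows "H \<subseteq> H <+>\<^bsub>M\<^esub> K" and "K \<subseteq> H <+>\<^bsub>M\<^esub> K"
proof -
  have "h \<oplus>\<^bsub>M\<^esub> \<zero>\<^bsub>M\<^esub> \<in> H <+>\<^bsub>M\<^esub> K" "\<zero>\<^bsub>M\<^esub> \<oplus>\<^bsub>M\<^esub> k \<in> H <+>\<^bsub>M\<^esub> K"
    if "h \<in> H" "k \<in> K" for h k
    using that submodule_zero_closed[OF H] submodule_zero_closed[OF K] by (simp_all add: set_add_memI)
  then show "H \<subseteq> H <+>\<^bsub>M\<^esub> K" "K \<subseteq> H <+>\<^bsub>M\<^esub> K"
    using submodule_zero_closed[OF H] submodule_zero_closed[OF K]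
      submoduleE(1)[OF H] submoduleE(1)[OF K] by (auto simp: subset_iff)
qed

lemma cyclic_submodule:
  assumes "w \<in> carrier M"
  shows "submodule {t \<odot>\<^bsub>M\<^esub> w | t. t \<in> carrier R} R M"
proof (rule submoduleI)
  have "\<zero>\<^bsub>M\<^esub> = \<zero>\<^bsub>R\<^esub> \<odot>\<^bsub>M\<^esub> w" using assms by simp
  then show "\<zero>\<^bsub>M\<^esub> \<in> {t \<odot>\<^bsub>M\<^esub> w | t. t \<in> carrier R}" by blast
  show "\<ominus>\<^bsub>M\<^esub> x \<in> {t \<odot>\<^bsub>M\<^esub> w | t. t \<in> carrier R}"
    if "x \<in> {t \<odot>\<^bsub>M\<^esub> w | t. t \<in> carrier R}" for x
    using that assms smult_l_minus[symmetric] by blast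
  show "x \<oplus>\<^bsub>M\<^esub> y \<in> {t \<odot>\<^bsub>M\<^esub> w | t. t \<in> carrier R}"
    if "x \<in> {t \<odot>\<^bsub>M\<^esub> w | t. t \<in> carrier R}" "y \<in> {t \<odot>\<^bsub>M\<^esub> w | t. t \<in> carrier R}" for x y
    using that assms smult_l_distr[symmetric] by blast
  show "a \<odot>\<^bsub>M\<^esub> x \<in> {t \<odot>\<^bsub>M\<^esub> w | t. t \<in> carrier R}"
    if "a \<in> carrier R" "x \<in> {t \<odot>\<^bsub>M\<^esub> w | t. t \<in> carrier R}" for a x
    using that assms smult_assoc1[symmetric] by blast
qed (use assms in auto)

lemma additive_zero:
  assumes "h \<in> carrier M \<rightarrow> carrier M"
    and "\<And>x y. x \<in> carrier M \<Longrightarrow> y \<in> carrier M \<Longrightarrow> h (x \<oplus>\<^bsub>M\<^esub> y) = h x \<oplus>\<^bsub>M\<^esub> h y"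
  shows "h \<zero>\<^bsub>M\<^esub> = \<zero>\<^bsub>M\<^esub>"
proof -
  have "h \<zero>\<^bsub>M\<^esub> \<oplus>\<^bsub>M\<^esub> h \<zero>\<^bsub>M\<^esub> = h \<zero>\<^bsub>M\<^esub>"
    using assms(2)[of "\<zero>\<^bsub>M\<^esub>" "\<zero>\<^bsub>M\<^esub>"] by simp
  then show ?thesis using assms(1) M.add.r_cancel_one[of "h \<zero>\<^bsub>M\<^esub>" "h \<zero>\<^bsub>M\<^esub>"] by auto
qed

lemma additive_finsum:
  assumes h: "h \<in> carrier M \<rightarrow> carrier M"
    and add: "\<And>x y. x \<in> carrier M \<Longrightarrow> y \<in> carrier M \<Longrightarrow> h (x \<oplus>\<^bsub>M\<^esub> y) = h x \<oplus>\<^bsub>M\<^esub> h y"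
    and "finite S" and "f \<in> S \<rightarrow> carrier M"
  shows "h (finsum M f S) = finsum M (h \<circ> f) S"
  using assms(3,4)
proof (induction S rule: finite_induct)
  case empty
  then show ?case using additive_zero[OF h add] by simp
next
  case (insert s S)
  then show ?case using h by (simp add: M.finsum_insert add Pi_iff)
qed

lemma smult_add_pow_one:
  assumes "x \<in> carrier M"
  shows "([(n::nat)] \<cdot>\<^bsub>R\<^esub> \<one>\<^bsub>R\<^esub>) \<odot>\<^bsub>M\<^esub> x = [n] \<cdot>\<^bsub>M\<^esub> x"
  using assms by (induction n) (simp_all add: R.add.nat_pow_Suc M.add.nat_pow_Suc smult_l_distr)

definition linear_endomorphism :: "('c \<Rightarrow> 'c) \<Rightarrow> bool" where
  "linear_endomorphism h \<longleftrightarrow> h \<in> carrier M \<rightarrow> carrier M \<and>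
     (\<forall>x \<in> carrier M. \<forall>y \<in> carrier M. h (x \<oplus>\<^bsub>M\<^esub> y) = h x \<oplus>\<^bsub>M\<^esub> h y) \<and>
     (\<forall>a \<in> carrier R. \<forall>x \<in> carrier M. h (a \<odot>\<^bsub>M\<^esub> x) = a \<odot>\<^bsub>M\<^esub> h x)"

definition linear_projection :: "'c set \<Rightarrow> ('c \<Rightarrow> 'c) \<Rightarrow> bool" where
  "linear_projection B p \<longleftrightarrow> linear_endomorphism p \<and> p ` carrier M \<subseteq> B \<and> (\<forall>b \<in> B. p b = b)"

context
  fixes h assumes h: "linear_endomorphism h"
begin

lemma linear_endomorphism_closed: "x \<in> carrier M \<Longrightarrow> h x \<in> carrier M"
  using h unfolding linear_endomorphism_def by blast

lemma linear_endomorphism_add: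
  "x \<in> carrier M \<Longrightarrow> y \<in> carrier M \<Longrightarrow> h (x \<oplus>\<^bsub>M\<^esub> y) = h x \<oplus>\<^bsub>M\<^esub> h y"
  using h unfolding linear_endomorphism_def by blast

lemma linear_endomorphism_smult:
  "a \<in> carrier R \<Longrightarrow> x \<in> carrier M \<Longrightarrow> h (a \<odot>\<^bsub>M\<^esub> x) = a \<odot>\<^bsub>M\<^esub> h x"
  using h unfolding linear_endomorphism_def by blast

lemma linear_endomorphism_zero: "h \<zero>\<^bsub>M\<^esub> = \<zero>\<^bsub>M\<^esub>"
  using linear_endomorphism_smult[of "\<zero>\<^bsub>R\<^esub>" "\<zero>\<^bsub>M\<^esub>"] linear_endomorphism_closed[of "\<zero>\<^bsub>M\<^esub>"]
  by simp

lemma linear_endomorphism_minus: "x \<in> carrier M \<Longrightarrow> h (\<ominus>\<^bsub>M\<^esub> x) = \<ominus>\<^bsub>M\<^esub> h x"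
  using linear_endomorphism_smult[of "\<ominus>\<^bsub>R\<^esub> \<one>\<^bsub>R\<^esub>" x] linear_endomorphism_closed[of x]
  by (simp add: smult_l_minus)

lemma linear_endomorphism_scale:
  assumes "a \<in> carrier R"
  shows "linear_endomorphism (\<lambda>x. a \<odot>\<^bsub>M\<^esub> h x)"
  unfolding linear_endomorphism_def using assms
  by (simp add: linear_endomorphism_closed linear_endomorphism_add linear_endomorphism_smult
      smult_r_distr smult_assoc1[symmetric] R.m_comm)

lemma submodule_kernel: "submodule {x \<in> carrier M. h x = \<zero>\<^bsub>M\<^esub>} R M"
  by (rule submoduleI)
    (simp_all add: linear_endomorphism_zero linear_endomorphism_minus
      linear_endomorphism_add linear_endomorphism_smult)

lemma submodule_image: "submodule (h ` carrier M) R M"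
proof (rule submoduleI)
  show "h ` carrier M \<subseteq> carrier M" using linear_endomorphism_closed by (rule image_subsetI)
  have "h \<zero>\<^bsub>M\<^esub> \<in> h ` carrier M" by (rule imageI) simp
  then show "\<zero>\<^bsub>M\<^esub> \<in> h ` carrier M" by (simp add: linear_endomorphism_zero)
  show "\<ominus>\<^bsub>M\<^esub> y \<in> h ` carrier M" if y: "y \<in> h ` carrier M" for y
  proof -
    obtain x where "y = h x" "x \<in> carrier M" using y by (rule imageE)
    then show ?thesis using linear_endomorphism_minus
      by (intro image_eqI[of _ h "\<ominus>\<^bsub>M\<^esub> x"]) simp_all
  qed
  show "y \<oplus>\<^bsub>M\<^esub> z \<in> h ` carrier M" if y: "y \<in> h ` carrier M" and z: "z \<in> h ` carrier M" for y z
  proof -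
    obtain x x' where "y = h x" "x \<in> carrier M" "z = h x'" "x' \<in> carrier M"
      using y z by (elim imageE)
    then show ?thesis using linear_endomorphism_add
      by (intro image_eqI[of _ h "x \<oplus>\<^bsub>M\<^esub> x'"]) simp_all
  qed
  show "a \<odot>\<^bsub>M\<^esub> y \<in> h ` carrier M" if a: "a \<in> carrier R" and y: "y \<in> h ` carrier M" for a y
  proof -
    obtain x where "y = h x" "x \<in> carrier M" using y by (rule imageE)
    then show ?thesis using a linear_endomorphism_smult
      by (intro image_eqI[of _ h "a \<odot>\<^bsub>M\<^esub> x"]) simp_all
  qed
qed

end

lemma complement_unique_left:
  assumes B: "submodule B R M" and C: "submodule C R M" and BC: "B \<inter> C = {\<zero>\<^bsub>M\<^esub>}"
    and b: "b \<in> B" "b' \<in> B" and c: "c \<in> C" "c' \<in> C"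
    and eq: "b \<oplus>\<^bsub>M\<^esub> c = b' \<oplus>\<^bsub>M\<^esub> c'"
  shows "b = b'"
proof -
  have carr: "b \<in> carrier M" "b' \<in> carrier M" "c \<in> carrier M" "c' \<in> carrier M"
    using b c submoduleE(1)[OF B] submoduleE(1)[OF C] by auto
  define d where "d = c' \<oplus>\<^bsub>M\<^esub> \<ominus>\<^bsub>M\<^esub> c"
  have "b' \<oplus>\<^bsub>M\<^esub> d = (b' \<oplus>\<^bsub>M\<^esub> c') \<oplus>\<^bsub>M\<^esub> \<ominus>\<^bsub>M\<^esub> c"
    unfolding d_def using carr by (simp add: M.a_assoc)
  also have "\<dots> = b" unfolding eq[symmetric] using carr by (simp add: M.a_assoc M.r_neg)
  finally have bd: "b' \<oplus>\<^bsub>M\<^esub> d = b" .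
  have "d \<in> C" unfolding d_def using c submoduleE(3,5)[OF C] by blast
  moreover have "d \<in> B"
  proof -
    have "d \<in> carrier M" unfolding d_def using carr by simp
    then have "d = \<ominus>\<^bsub>M\<^esub> b' \<oplus>\<^bsub>M\<^esub> b" using bd[symmetric] carr by (simp add: M.r_neg1)
    then show ?thesis using b submoduleE(3,5)[OF B] by simp
  qed
  ultimately have "d = \<zero>\<^bsub>M\<^esub>" using BC by blast
  then show ?thesis using bd carr by simp
qed

lemma linear_projection_of_complement:
  assumes B: "submodule B R M" and C: "submodule C R M" and BC: "B \<inter> C = {\<zero>\<^bsub>M\<^esub>}"
    and cover: "carrier M \<subseteq> B <+>\<^bsub>M\<^esub> C"
  shows "\<exists>p. linear_projection B p"
proof -
  define p where "p x = (THE b. b \<in> B \<and> (\<exists>c \<in> C. x = b \<oplus>\<^bsub>M\<^esub> c))" for x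
  have p_eq: "p (b \<oplus>\<^bsub>M\<^esub> c) = b" if "b \<in> B" "c \<in> C" for b c
    unfolding p_def using that complement_unique_left[OF B C BC]
    by (intro the_equality) blast+
  have split: "\<exists>b \<in> B. \<exists>c \<in> C. x = b \<oplus>\<^bsub>M\<^esub> c" if "x \<in> carrier M" for x
    using cover that by (blast elim: set_add_memE)
  note closed = submoduleE(1,4,5)[OF B] submoduleE(1,4,5)[OF C]
  have add: "p (x \<oplus>\<^bsub>M\<^esub> y) = p x \<oplus>\<^bsub>M\<^esub> p y" if x: "x \<in> carrier M" and y: "y \<in> carrier M" for x y
  proof -
    obtain b c b' c' where "b \<in> B" "c \<in> C" "x = b \<oplus>\<^bsub>M\<^esub> c" "b' \<in> B" "c' \<in> C" "y = b' \<oplus>\<^bsub>M\<^esub> c'"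
      using split[OF x] split[OF y] by blast
    moreover from this have "x \<oplus>\<^bsub>M\<^esub> y = (b \<oplus>\<^bsub>M\<^esub> b') \<oplus>\<^bsub>M\<^esub> (c \<oplus>\<^bsub>M\<^esub> c')"
      using closed(1,4) by (simp add: M.a_ac subsetD)
    ultimately show ?thesis using closed p_eq by simp
  qed
  have smult: "p (a \<odot>\<^bsub>M\<^esub> x) = a \<odot>\<^bsub>M\<^esub> p x" if a: "a \<in> carrier R" and x: "x \<in> carrier M" for a x
  proof -
    obtain b c where "b \<in> B" "c \<in> C" "x = b \<oplus>\<^bsub>M\<^esub> c" using split[OF x] by blast
    moreover from this have "a \<odot>\<^bsub>M\<^esub> x = a \<odot>\<^bsub>M\<^esub> b \<oplus>\<^bsub>M\<^esub> a \<odot>\<^bsub>M\<^esub> c"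
      using a closed(1,4) by (simp add: smult_r_distr subsetD)
    ultimately show ?thesis using a closed p_eq by simp
  qed
  have fixes_B: "p b = b" if "b \<in> B" for b
    using p_eq[OF that submodule_zero_closed[OF C]] that closed(1) by (simp add: subsetD)
  have into_B: "p x \<in> B" if "x \<in> carrier M" for x
    using split[OF that] p_eq by auto
  have "linear_endomorphism p"
    unfolding linear_endomorphism_def using add smult into_B closed(1) by auto
  then have "linear_projection B p"
    unfolding linear_projection_def using fixes_B into_B by (simp add: image_subsetI)
  then show ?thesis by blast
qed

end

section \<open>Modules over a residue field\<close>

lemma (in cring) maximalideal_add_cgenideal:
  assumes I: "maximalideal I R" and a: "a \<in> carrier R" "a \<notin> I"
  shows "I <+>\<^bsub>R\<^esub> PIdl a = carrier R"
proof -
  have ideal_I: "ideal I R" using I by (rule maximalideal.axioms(1))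
  have ideal_J: "ideal (I <+>\<^bsub>R\<^esub> PIdl a) R"
    using add_ideals[OF ideal_I cgenideal_ideal[OF a(1)]] .
  have "i \<oplus> \<zero> \<otimes> a \<in> I <+>\<^bsub>R\<^esub> PIdl a" if "i \<in> I" for i
    using that a(1) unfolding set_add_def' cgenideal_def by blast
  then have "I \<subseteq> I <+>\<^bsub>R\<^esub> PIdl a"
    using ideal.Icarr[OF ideal_I] a(1) by (auto simp: subset_iff)
  moreover have "\<zero> \<oplus> \<one> \<otimes> a \<in> I <+>\<^bsub>R\<^esub> PIdl a"
    using additive_subgroup.zero_closed[OF ideal.axioms(1)[OF ideal_I]] a(1)
    unfolding set_add_def' cgenideal_def by blast
  then have "a \<in> I <+>\<^bsub>R\<^esub> PIdl a" using a(1) by simp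
  ultimately show ?thesis
    using maximalideal.I_maximal[OF I ideal_J] ideal.Icarr[OF ideal_J] a(2) by blast
qed

lemma (in ring) add_pow_one_notin_ideal:
  assumes I: "ideal I R" and char0: "char_zero_ring (R Quot I)" and n: "n > 0"
  shows "[(n::nat)] \<cdot> \<one> \<notin> I"
proof
  interpret H: ring_hom_ring R "R Quot I" "(+>) I" by (rule ideal.rcos_ring_hom_ring[OF I])
  have hom_add_pow: "I +> ([m] \<cdot> \<one>) = [(m::nat)] \<cdot>\<^bsub>R Quot I\<^esub> \<one>\<^bsub>R Quot I\<^esub>" for m
    by (induction m) (simp_all add: add.nat_pow_Suc H.S.add.nat_pow_Suc)
  assume "[n] \<cdot> \<one> \<in> I"
  then have "[n] \<cdot>\<^bsub>R Quot I\<^esub> \<one>\<^bsub>R Quot I\<^esub> = \<zero>\<^bsub>R Quot I\<^esub>"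
    using quotient_eq_iff_same_a_r_cos[OF I, of "[n] \<cdot> \<one>" \<zero>] hom_add_pow by (simp add: a_minus_def)
  then show False using char0 n unfolding char_zero_ring_def by blast
qed

text \<open>A module annihilated by a maximal ideal P, that is, a vector space over the residue field R/P.\<close>
locale residue_module = module +
  fixes P :: "'a set"
  assumes maximal: "maximalideal P R"
    and annihilates: "\<And>p x. p \<in> P \<Longrightarrow> x \<in> carrier M \<Longrightarrow> p \<odot>\<^bsub>M\<^esub> x = \<zero>\<^bsub>M\<^esub>"
begin

lemma smult_invertible:
  assumes t: "t \<in> carrier R" "t \<notin> P"
  obtains s where "s \<in> carrier R" and "\<And>x. x \<in> carrier M \<Longrightarrow> s \<odot>\<^bsub>M\<^esub> (t \<odot>\<^bsub>M\<^esub> x) = x"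
proof -
  have "\<one> \<in> P <+>\<^bsub>R\<^esub> PIdl t" using maximalideal_add_cgenideal[OF maximal t] by simp
  then obtain p k where p: "p \<in> P" and k: "k \<in> PIdl t" and one: "\<one> = p \<oplus> k"
    by (rule set_add_memE)
  obtain s where s: "s \<in> carrier R" and k_eq: "k = s \<otimes> t" using k unfolding cgenideal_def by blast
  have p_carr: "p \<in> carrier R" using ideal.Icarr[OF maximalideal.axioms(1)[OF maximal] p] .
  have "s \<odot>\<^bsub>M\<^esub> (t \<odot>\<^bsub>M\<^esub> x) = x" if x: "x \<in> carrier M" for x
  proof -
    have "x = (p \<oplus> s \<otimes> t) \<odot>\<^bsub>M\<^esub> x" using x by (simp flip: one k_eq)
    also have "\<dots> = p \<odot>\<^bsub>M\<^esub> x \<oplus>\<^bsub>M\<^esub> s \<odot>\<^bsub>M\<^esub> (t \<odot>\<^bsub>M\<^esub> x)"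
      using p_carr s t x by (simp add: smult_l_distr smult_assoc1)
    also have "\<dots> = s \<odot>\<^bsub>M\<^esub> (t \<odot>\<^bsub>M\<^esub> x)" using annihilates[OF p x] s t x by simp
    finally show ?thesis by simp
  qed
  with s show thesis by (rule that)
qed

lemma disjoint_add_cyclic:
  assumes B: "submodule B R M" and C: "submodule C R M" and BC: "B \<inter> C = {\<zero>\<^bsub>M\<^esub>}"
    and w: "w \<in> carrier M" "w \<notin> B <+>\<^bsub>M\<^esub> C"
  shows "B \<inter> (C <+>\<^bsub>M\<^esub> {t \<odot>\<^bsub>M\<^esub> w | t. t \<in> carrier R}) = {\<zero>\<^bsub>M\<^esub>}"
proof -
  have "y = \<zero>\<^bsub>M\<^esub>" if yB: "y \<in> B" and y: "y \<in> C <+>\<^bsub>M\<^esub> {t \<odot>\<^bsub>M\<^esub> w | t. t \<in> carrier R}" for y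
  proof -
    obtain c t where c: "c \<in> C" and t: "t \<in> carrier R" and y_eq: "y = c \<oplus>\<^bsub>M\<^esub> t \<odot>\<^bsub>M\<^esub> w"
      using y by (auto elim: set_add_memE)
    have c_carr: "c \<in> carrier M" and y_carr: "y \<in> carrier M"
      using c yB submoduleE(1)[OF C] submoduleE(1)[OF B] by auto
    show ?thesis
    proof (cases "t \<in> P")
      case True
      then have "y = c" using y_eq annihilates[OF True w(1)] c_carr by simp
      then show ?thesis using BC yB c by blast
    next
      case False
      obtain s where s: "s \<in> carrier R" and s_inv: "\<And>x. x \<in> carrier M \<Longrightarrow> s \<odot>\<^bsub>M\<^esub> (t \<odot>\<^bsub>M\<^esub> x) = x"
        using smult_invertible[OF t False] by blast
      have "t \<odot>\<^bsub>M\<^esub> w = \<ominus>\<^bsub>M\<^esub> c \<oplus>\<^bsub>M\<^esub> y"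
        using y_eq c_carr w(1) t by (simp add: M.r_neg1)
      then have "w = s \<odot>\<^bsub>M\<^esub> y \<oplus>\<^bsub>M\<^esub> s \<odot>\<^bsub>M\<^esub> (\<ominus>\<^bsub>M\<^esub> c)"
        using s_inv[OF w(1)] s c_carr y_carr by (simp add: smult_r_distr M.a_comm)
      moreover have "s \<odot>\<^bsub>M\<^esub> y \<in> B" "s \<odot>\<^bsub>M\<^esub> (\<ominus>\<^bsub>M\<^esub> c) \<in> C"
        using s yB c submoduleE(3,4)[OF B] submoduleE(3,4)[OF C] by auto
      ultimately have "w \<in> B <+>\<^bsub>M\<^esub> C" by (simp add: set_add_memI)
      with w(2) show ?thesis by contradiction
    qed
  qed
  moreover have "\<zero>\<^bsub>M\<^esub> \<in> C <+>\<^bsub>M\<^esub> {t \<odot>\<^bsub>M\<^esub> w | t. t \<in> carrier R}"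
    using submodule_zero_closed[OF submodule_set_add[OF C cyclic_submodule[OF w(1)]]] .
  ultimately show ?thesis using submodule_zero_closed[OF B] by blast
qed

lemma complement_covering_finite:
  assumes B: "submodule B R M" and "finite F" and "F \<subseteq> carrier M"
  shows "\<exists>C. submodule C R M \<and> B \<inter> C = {\<zero>\<^bsub>M\<^esub>} \<and> F \<subseteq> B <+>\<^bsub>M\<^esub> C"
  using assms(2,3)
proof (induction F rule: finite_induct)
  case empty
  have "submodule {\<zero>\<^bsub>M\<^esub>} R M" by (rule submoduleI) auto
  moreover have "B \<inter> {\<zero>\<^bsub>M\<^esub>} = {\<zero>\<^bsub>M\<^esub>}" using submodule_zero_closed[OF B] by blast
  ultimately show ?case by blast
next
  case (insert w F)
  then obtain C where C: "submodule C R M" "B \<inter> C = {\<zero>\<^bsub>M\<^esub>}" "F \<subseteq> B <+>\<^bsub>M\<^esub> C"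
    by auto
  have w: "w \<in> carrier M" using insert.prems by simp
  show ?case
  proof (cases "w \<in> B <+>\<^bsub>M\<^esub> C")
    case True
    with C show ?thesis by blast
  next
    case False
    define C' where "C' = C <+>\<^bsub>M\<^esub> {t \<odot>\<^bsub>M\<^esub> w | t. t \<in> carrier R}"
    have C': "submodule C' R M"
      unfolding C'_def using submodule_set_add[OF C(1) cyclic_submodule[OF w]] .
    have "C \<subseteq> C'" "w \<in> C'"
    proof -
      have "w = \<one> \<odot>\<^bsub>M\<^esub> w" using w by simp
      then have "w \<in> {t \<odot>\<^bsub>M\<^esub> w | t. t \<in> carrier R}" by blast
      then show "C \<subseteq> C'" "w \<in> C'"
        unfolding C'_def using submodule_set_add_upper[OF C(1) cyclic_submodule[OF w]] by auto
    qed
    then have "B <+>\<^bsub>M\<^esub> C \<subseteq> B <+>\<^bsub>M\<^esub> C'" "w \<in> B <+>\<^bsub>M\<^esub> C'"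
      using submodule_set_add_upper(2)[OF B C'] by (auto elim!: set_add_memE intro: set_add_memI)
    moreover have "B \<inter> C' = {\<zero>\<^bsub>M\<^esub>}"
      unfolding C'_def using disjoint_add_cyclic[OF B C(1,2) w False] .
    ultimately show ?thesis using C(3) C' by blast
  qed
qed

end

section \<open>Components in an internal direct sum\<close>

locale direct_sum_decomposition = module R M
  for R :: "('a, 'b) ring_scheme" and M :: "('a, 'c) module" +
  fixes L :: "'l set" and Bf :: "'l \<Rightarrow> 'c set" and B :: "'c set"
  assumes direct_sum: "internal_direct_sum M L Bf B"
    and summand_submodule: "\<And>l. l \<in> L \<Longrightarrow> submodule (Bf l) R M"
begin

text \<open>Decompositions are normalised to vanish outside their finite support T, so that
  the family of components of an element is a single well-defined function.\<close>
definition decomposes :: "'l set \<Rightarrow> ('l \<Rightarrow> 'c) \<Rightarrow> 'c \<Rightarrow> bool" where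
  "decomposes T c b \<longleftrightarrow> finite T \<and> T \<subseteq> L \<and> (\<forall>l \<in> T. c l \<in> Bf l) \<and>
     (\<forall>l. l \<notin> T \<longrightarrow> c l = \<zero>\<^bsub>M\<^esub>) \<and> b = finsum M c T"

definition components :: "'c \<Rightarrow> 'l \<Rightarrow> 'c" where
  "components b = (THE c. \<exists>T. decomposes T c b)"

lemma decomposes_closed:
  assumes "decomposes T c b"
  shows "c \<in> T \<rightarrow> carrier M" and "c l \<in> carrier M"
proof -
  show "c \<in> T \<rightarrow> carrier M"
    using assms submoduleE(1)[OF summand_submodule] unfolding decomposes_def by blast
  then show "c l \<in> carrier M" using assms unfolding decomposes_def by (cases "l \<in> T") auto
qed

lemma decomposes_exists:
  assumes "b \<in> B"
  obtains T c where "decomposes T c b"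
proof -
  obtain T x where T: "finite T" "T \<subseteq> L" "\<forall>l \<in> T. x l \<in> Bf l" and b: "b = finsum M x T"
    using assms direct_sum unfolding internal_direct_sum_def by blast
  define c where "c l = (if l \<in> T then x l else \<zero>\<^bsub>M\<^esub>)" for l
  have "x \<in> T \<rightarrow> carrier M" using T submoduleE(1)[OF summand_submodule] by blast
  then have "finsum M c T = finsum M x T" unfolding c_def by (intro M.finsum_cong') auto
  then have "decomposes T c b" using T b unfolding decomposes_def c_def by auto
  then show thesis by (rule that)
qed

lemma decomposes_mono:
  assumes d: "decomposes T c b" and U: "finite U" "T \<subseteq> U" "U \<subseteq> L"
  shows "decomposes U c b"
proof -
  have "finsum M c U = finsum M c T"
    using d U decomposes_closed(2)[OF d] unfolding decomposes_def
    by (intro M.add.finprod_mono_neutral_cong_right) auto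
  moreover have "\<forall>l \<in> U. c l \<in> Bf l"
    using d U submodule_zero_closed[OF summand_submodule] unfolding decomposes_def by (metis subsetD)
  ultimately show ?thesis using d U unfolding decomposes_def by auto
qed

lemma decomposes_unique:
  assumes d: "decomposes T c b" and d': "decomposes T' c' b"
  shows "c = c'"
proof
  fix l
  define U where "U = T \<union> T'"
  have U: "finite U" "U \<subseteq> L" using d d' unfolding U_def decomposes_def by auto
  have e: "decomposes U c b" and e': "decomposes U c' b"
    using decomposes_mono[OF d U(1) _ U(2)] decomposes_mono[OF d' U(1) _ U(2)] unfolding U_def by auto
  note carr = decomposes_closed[OF e] decomposes_closed[OF e']
  define z where "z k = c k \<oplus>\<^bsub>M\<^esub> \<ominus>\<^bsub>M\<^esub> c' k" for k
  have "finsum M z U = b \<oplus>\<^bsub>M\<^esub> \<ominus>\<^bsub>M\<^esub> b"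
  proof -
    have "finsum M z U = finsum M c U \<oplus>\<^bsub>M\<^esub> finsum M (a_inv M \<circ> c') U"
      unfolding z_def using M.finsum_addf[where f = c and g = "a_inv M \<circ> c'" and A = U] carr
      by (simp add: Pi_iff)
    also have "finsum M (a_inv M \<circ> c') U = \<ominus>\<^bsub>M\<^esub> finsum M c' U"
      using additive_finsum[of "a_inv M", OF _ _ U(1) carr(3)] by (simp add: M.minus_add)
    finally show ?thesis using e e' unfolding decomposes_def by simp
  qed
  also have "\<dots> = \<zero>\<^bsub>M\<^esub>" using e carr(1) unfolding decomposes_def by (simp add: M.r_neg)
  finally have z0: "finsum M z U = \<zero>\<^bsub>M\<^esub>" .
  have "\<forall>k \<in> U. z k \<in> Bf k"
    using e e' U submoduleE(3,5)[OF summand_submodule] unfolding z_def decomposes_def by blast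
  then have "\<forall>k \<in> U. z k = \<zero>\<^bsub>M\<^esub>" using direct_sum U z0 unfolding internal_direct_sum_def by blast
  then show "c l = c' l"
    using e e' carr unfolding z_def decomposes_def
    by (metis M.add.inv_solve_right' M.zero_closed M.l_zero)
qed

lemma components_eq: "decomposes T c b \<Longrightarrow> components b = c"
  unfolding components_def using decomposes_unique by blast

lemma components_zero: "components \<zero>\<^bsub>M\<^esub> l = \<zero>\<^bsub>M\<^esub>"
  using components_eq[of "{}" "\<lambda>_. \<zero>\<^bsub>M\<^esub>"] by (simp add: decomposes_def)

lemma components_in_summand:
  assumes "l \<in> L" and "b \<in> B"
  shows "components b l \<in> Bf l"
proof -
  obtain T c where d: "decomposes T c b" using assms(2) by (rule decomposes_exists)
  then show ?thesis
    using assms(1) submodule_zero_closed[OF summand_submodule] unfolding components_eq[OF d]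
    unfolding decomposes_def by (cases "l \<in> T") auto
qed

lemma components_add:
  assumes "b \<in> B" and "b' \<in> B"
  shows "components (b \<oplus>\<^bsub>M\<^esub> b') l = components b l \<oplus>\<^bsub>M\<^esub> components b' l"
proof -
  obtain T c where d: "decomposes T c b" using assms(1) by (rule decomposes_exists)
  obtain T' c' where d': "decomposes T' c' b'" using assms(2) by (rule decomposes_exists)
  have U: "finite (T \<union> T')" "T \<union> T' \<subseteq> L" using d d' unfolding decomposes_def by auto
  have e: "decomposes (T \<union> T') c b" and e': "decomposes (T \<union> T') c' b'"
    using decomposes_mono[OF d U(1) _ U(2)] decomposes_mono[OF d' U(1) _ U(2)] by auto
  note carr = decomposes_closed[OF e] decomposes_closed[OF e']
  have "decomposes (T \<union> T') (\<lambda>k. c k \<oplus>\<^bsub>M\<^esub> c' k) (b \<oplus>\<^bsub>M\<^esub> b')"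
    using e e' U carr submoduleE(5)[OF summand_submodule]
    unfolding decomposes_def by (auto simp: M.finsum_addf)
  then show ?thesis using components_eq d d' by simp
qed

lemma components_map:
  assumes f: "f \<in> carrier M \<rightarrow> carrier M"
    and add: "\<And>x y. x \<in> carrier M \<Longrightarrow> y \<in> carrier M \<Longrightarrow> f (x \<oplus>\<^bsub>M\<^esub> y) = f x \<oplus>\<^bsub>M\<^esub> f y"
    and summands: "\<And>l x. l \<in> L \<Longrightarrow> x \<in> Bf l \<Longrightarrow> f x \<in> Bf l"
    and b: "b \<in> B"
  shows "components (f b) l = f (components b l)"
proof -
  obtain T c where d: "decomposes T c b" using b by (rule decomposes_exists)
  have "decomposes T (f \<circ> c) (f b)"
    using d summands additive_zero[OF f add] additive_finsum[OF f add _ decomposes_closed(1)[OF d]]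
    unfolding decomposes_def by auto
  then show ?thesis using components_eq d by simp
qed

lemma components_nonzero:
  assumes "b \<in> B" and "b \<noteq> \<zero>\<^bsub>M\<^esub>"
  obtains l where "l \<in> L" and "components b l \<noteq> \<zero>\<^bsub>M\<^esub>"
proof -
  obtain T c where d: "decomposes T c b" using assms(1) by (rule decomposes_exists)
  have "\<exists>l \<in> T. c l \<noteq> \<zero>\<^bsub>M\<^esub>"
  proof (rule ccontr)
    assume "\<not> (\<exists>l \<in> T. c l \<noteq> \<zero>\<^bsub>M\<^esub>)"
    then have "finsum M c T = finsum M (\<lambda>_. \<zero>\<^bsub>M\<^esub>) T" by (intro M.finsum_cong') auto
    then show False using d assms(2) unfolding decomposes_def by simp
  qed
  then obtain l where l: "l \<in> T" "c l \<noteq> \<zero>\<^bsub>M\<^esub>" by blast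
  moreover have "l \<in> L" using d l(1) unfolding decomposes_def by blast
  ultimately show thesis using components_eq[OF d] by (intro that) simp_all
qed

lemma linear_endomorphism_component:
  assumes f: "linear_endomorphism f" and into_B: "f ` carrier M \<subseteq> B" and l: "l \<in> L"
  shows "linear_endomorphism (\<lambda>y. components (f y) l)"
  unfolding linear_endomorphism_def
proof (intro conjI ballI)
  have "components (f y) l \<in> Bf l" if "y \<in> carrier M" for y
    using components_in_summand[OF l] into_B that by blast
  then show "(\<lambda>y. components (f y) l) \<in> carrier M \<rightarrow> carrier M"
    using submoduleE(1)[OF summand_submodule[OF l]] by blast
  show "components (f (x \<oplus>\<^bsub>M\<^esub> y)) l = components (f x) l \<oplus>\<^bsub>M\<^esub> components (f y) l"
    if "x \<in> carrier M" "y \<in> carrier M" for x y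
    using that into_B by (simp add: linear_endomorphism_add[OF f] components_add image_subset_iff)
  show "components (f (a \<odot>\<^bsub>M\<^esub> x)) l = a \<odot>\<^bsub>M\<^esub> components (f x) l"
    if a: "a \<in> carrier R" and x: "x \<in> carrier M" for a x
    using components_map[of "\<lambda>z. a \<odot>\<^bsub>M\<^esub> z", OF _ _ _ into_B[THEN subsetD, OF imageI[OF x]]]
      a x submoduleE(4)[OF summand_submodule]
    by (simp add: linear_endomorphism_smult[OF f] smult_r_distr)
qed

end

section \<open>DG-modules\<close>

locale dg_module = module D M + G: group G + group_action G "carrier M" \<phi>
  for D :: "('d, 'e) ring_scheme" and M :: "('d, 'm) module"
    and G :: "('g, 'h) monoid_scheme" and \<phi> +
  assumes act_add:
      "\<And>g x y. g \<in> carrier G \<Longrightarrow> x \<in> carrier M \<Longrightarrow> y \<in> carrier M \<Longrightarrow>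
         \<phi> g (x \<oplus>\<^bsub>M\<^esub> y) = \<phi> g x \<oplus>\<^bsub>M\<^esub> \<phi> g y"
    and act_smult:
      "\<And>g a x. g \<in> carrier G \<Longrightarrow> a \<in> carrier D \<Longrightarrow> x \<in> carrier M \<Longrightarrow>
         \<phi> g (a \<odot>\<^bsub>M\<^esub> x) = a \<odot>\<^bsub>M\<^esub> \<phi> g x"

lemma dg_moduleI: "DG_module D G M \<phi> \<Longrightarrow> dg_module D M G \<phi>"
  unfolding DG_module_def dg_module_def dg_module_axioms_def group_action_def group_hom_def
  by blast

context dg_module
begin

definition equivariant :: "('m \<Rightarrow> 'm) \<Rightarrow> bool" where
  "equivariant h \<longleftrightarrow> (\<forall>g \<in> carrier G. \<forall>x \<in> carrier M. h (\<phi> g x) = \<phi> g (h x))"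

lemma act_closed [simp]: "g \<in> carrier G \<Longrightarrow> x \<in> carrier M \<Longrightarrow> \<phi> g x \<in> carrier M"
  using element_image by blast

lemma act_one [simp]: "x \<in> carrier M \<Longrightarrow> \<phi> \<one>\<^bsub>G\<^esub> x = x"
  using id_eq_one by (metis restrict_apply')

lemma act_mult:
  "g \<in> carrier G \<Longrightarrow> h \<in> carrier G \<Longrightarrow> x \<in> carrier M \<Longrightarrow> \<phi> (g \<otimes>\<^bsub>G\<^esub> h) x = \<phi> g (\<phi> h x)"
  by (rule composition_rule)

lemma act_inv_act [simp]: "g \<in> carrier G \<Longrightarrow> x \<in> carrier M \<Longrightarrow> \<phi> (inv\<^bsub>G\<^esub> g) (\<phi> g x) = x"
  by (metis G.inv_closed G.l_inv act_mult act_one)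

lemma act_act_inv [simp]: "g \<in> carrier G \<Longrightarrow> x \<in> carrier M \<Longrightarrow> \<phi> g (\<phi> (inv\<^bsub>G\<^esub> g) x) = x"
  by (metis G.inv_closed G.r_inv act_mult act_one)

lemma act_finsum:
  "g \<in> carrier G \<Longrightarrow> finite S \<Longrightarrow> f \<in> S \<rightarrow> carrier M \<Longrightarrow>
    \<phi> g (finsum M f S) = (\<Oplus>\<^bsub>M\<^esub>s\<in>S. \<phi> g (f s))"
  using additive_finsum[of "\<phi> g"] act_add by (simp add: comp_def)

lemma linear_endomorphism_act: "g \<in> carrier G \<Longrightarrow> linear_endomorphism (\<phi> g)"
  unfolding linear_endomorphism_def by (simp add: act_add act_smult)

lemma DG_submodule_kernel:
  assumes "linear_endomorphism h" and "equivariant h"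
  shows "DG_submodule D G M \<phi> {x \<in> carrier M. h x = \<zero>\<^bsub>M\<^esub>}"
  unfolding DG_submodule_def using submodule_kernel[OF assms(1)] assms(2)
  by (simp add: equivariant_def linear_endomorphism_zero[OF linear_endomorphism_act])

lemma DG_submodule_image:
  assumes "linear_endomorphism h" and "equivariant h"
  shows "DG_submodule D G M \<phi> (h ` carrier M)"
proof -
  have "\<phi> g y \<in> h ` carrier M" if g: "g \<in> carrier G" and y: "y \<in> h ` carrier M" for g y
  proof -
    obtain x where "y = h x" "x \<in> carrier M" using y by (rule imageE)
    then have "\<phi> g y = h (\<phi> g x)" "\<phi> g x \<in> carrier M"
      using assms(2) g unfolding equivariant_def by simp_all
    then show ?thesis by (rule image_eqI)
  qed
  then show ?thesis unfolding DG_submodule_def using submodule_image[OF assms(1)] by blast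
qed

lemma DG_submodule_core:
  assumes S: "submodule S D M"
  shows "DG_submodule D G M \<phi> {x \<in> carrier M. \<forall>g \<in> carrier G. \<phi> g x \<in> S}"
  unfolding DG_submodule_def
proof
  note lin = linear_endomorphism_act
  show "submodule {x \<in> carrier M. \<forall>g \<in> carrier G. \<phi> g x \<in> S} D M"
    by (rule submoduleI)
      (use submodule_zero_closed[OF S] submoduleE(3-5)[OF S] in
        \<open>simp_all add: linear_endomorphism_zero[OF lin] linear_endomorphism_minus[OF lin]
          act_add act_smult\<close>)
  show "\<forall>h \<in> carrier G. \<forall>x \<in> {x \<in> carrier M. \<forall>g \<in> carrier G. \<phi> g x \<in> S}.
      \<phi> h x \<in> {x \<in> carrier M. \<forall>g \<in> carrier G. \<phi> g x \<in> S}"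
    by (simp add: act_mult[symmetric])
qed

lemma quotient_DG_iso_of_nonzero_map:
  assumes simple: "simple_DG_quotient D G M \<phi> B" and B: "B \<subseteq> carrier M"
    and S: "simple_DG_submodule D G M \<phi> S"
    and lin: "linear_endomorphism h" and eq: "equivariant h"
    and into_S: "h ` carrier M \<subseteq> S" and kills_B: "\<And>b. b \<in> B \<Longrightarrow> h b = \<zero>\<^bsub>M\<^esub>"
    and x: "x \<in> carrier M" "h x \<noteq> \<zero>\<^bsub>M\<^esub>"
  shows "quotient_DG_iso D G M \<phi> B S"
proof -
  have "h ` carrier M \<noteq> {\<zero>\<^bsub>M\<^esub>}" using x by blast
  then have image: "h ` carrier M = S"
    using S DG_submodule_image[OF lin eq] into_S unfolding simple_DG_submodule_def by blast
  have "{y \<in> carrier M. h y = \<zero>\<^bsub>M\<^esub>} \<noteq> carrier M" using x by blast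
  moreover have "B \<subseteq> {y \<in> carrier M. h y = \<zero>\<^bsub>M\<^esub>}" using B kills_B by blast
  ultimately have kernel: "{y \<in> carrier M. h y = \<zero>\<^bsub>M\<^esub>} = B"
    using simple DG_submodule_kernel[OF lin eq] unfolding simple_DG_quotient_def by blast
  show ?thesis
    unfolding quotient_DG_iso_def
    using image kernel linear_endomorphism_add[OF lin] linear_endomorphism_smult[OF lin] eq
    unfolding equivariant_def by blast
qed

lemma smult_zero_if_kills_sub_and_quot:
  assumes B: "DG_submodule D G M \<phi> B" and ds: "internal_direct_sum M L Bf B"
    and summands: "\<forall>l \<in> L. simple_DG_submodule D G M \<phi> (Bf l)"
    and simple: "simple_DG_quotient D G M \<phi> B"
    and not_iso: "\<forall>l \<in> L. \<not> quotient_DG_iso D G M \<phi> B (Bf l)"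
    and a: "a \<in> carrier D" and into_B: "\<And>x. x \<in> carrier M \<Longrightarrow> a \<odot>\<^bsub>M\<^esub> x \<in> B"
    and kills_B: "\<And>b. b \<in> B \<Longrightarrow> a \<odot>\<^bsub>M\<^esub> b = \<zero>\<^bsub>M\<^esub>"
    and x: "x \<in> carrier M"
  shows "a \<odot>\<^bsub>M\<^esub> x = \<zero>\<^bsub>M\<^esub>"
proof (rule ccontr)
  have summand_sub: "\<And>l. l \<in> L \<Longrightarrow> submodule (Bf l) D M"
    and summand_inv: "\<And>l g y. l \<in> L \<Longrightarrow> g \<in> carrier G \<Longrightarrow> y \<in> Bf l \<Longrightarrow> \<phi> g y \<in> Bf l"
    using summands unfolding simple_DG_submodule_def DG_submodule_def by auto
  interpret direct_sum_decomposition D M L Bf B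
    using module_axioms ds summand_sub
    by (intro direct_sum_decomposition.intro direct_sum_decomposition_axioms.intro)
  assume "a \<odot>\<^bsub>M\<^esub> x \<noteq> \<zero>\<^bsub>M\<^esub>"
  then obtain l where l: "l \<in> L" and nonzero: "components (a \<odot>\<^bsub>M\<^esub> x) l \<noteq> \<zero>\<^bsub>M\<^esub>"
    using components_nonzero into_B[OF x] by blast
  define h where "h y = components (a \<odot>\<^bsub>M\<^esub> y) l" for y
  have "linear_endomorphism (\<lambda>y. a \<odot>\<^bsub>M\<^esub> y)"
    unfolding linear_endomorphism_def using a
    by (simp add: smult_r_distr smult_assoc1[symmetric] R.m_comm)
  then have "linear_endomorphism h"
    unfolding h_def using linear_endomorphism_component[OF _ _ l] into_B by blast
  moreover have "equivariant h"
    unfolding equivariant_def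
  proof (intro ballI)
    fix g y assume g: "g \<in> carrier G" and y: "y \<in> carrier M"
    have "h (\<phi> g y) = components (\<phi> g (a \<odot>\<^bsub>M\<^esub> y)) l"
      unfolding h_def using g y a by (simp add: act_smult)
    also have "\<dots> = \<phi> g (h y)"
      unfolding h_def using components_map[of "\<phi> g", OF _ _ _ into_B[OF y]] g summand_inv
      by (simp add: act_add Pi_iff)
    finally show "h (\<phi> g y) = \<phi> g (h y)" .
  qed
  moreover have "h b = \<zero>\<^bsub>M\<^esub>" if "b \<in> B" for b
    unfolding h_def using kills_B[OF that] by (simp add: components_zero)
  moreover have "h ` carrier M \<subseteq> Bf l"
    unfolding h_def using components_in_summand[OF l] into_B by blast
  ultimately have "quotient_DG_iso D G M \<phi> B (Bf l)"
    using quotient_DG_iso_of_nonzero_map[OF simple] B summands l x nonzero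
    unfolding h_def DG_submodule_def by (meson submoduleE(1))
  then show False using not_iso l by blast
qed

lemma linear_complement_if_simple_quotient:
  assumes fin: "finite (carrier G)" and res: "residue_module D M P"
    and B: "DG_submodule D G M \<phi> B" and simple: "simple_DG_quotient D G M \<phi> B"
  shows "\<exists>C. submodule C D M \<and> B \<inter> C = {\<zero>\<^bsub>M\<^esub>} \<and> carrier M \<subseteq> B <+>\<^bsub>M\<^esub> C"
proof -
  interpret residue_module D M P by (rule res)
  have B_sub: "submodule B D M" using B unfolding DG_submodule_def by blast
  obtain a where a: "a \<in> carrier M" "a \<notin> B"
    using simple submoduleE(1)[OF B_sub] unfolding simple_DG_quotient_def by blast
  \<comment> \<open>covering the finite orbit of a suffices\<close>
  obtain C where C: "submodule C D M" "B \<inter> C = {\<zero>\<^bsub>M\<^esub>}"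
    and orbit: "(\<lambda>g. \<phi> g a) ` carrier G \<subseteq> B <+>\<^bsub>M\<^esub> C"
  proof -
    have "(\<lambda>g. \<phi> g a) ` carrier G \<subseteq> carrier M" using a(1) by auto
    then show thesis using that complement_covering_finite[OF B_sub finite_imageI[OF fin]] by blast
  qed
  define N where "N = {x \<in> carrier M. \<forall>g \<in> carrier G. \<phi> g x \<in> B <+>\<^bsub>M\<^esub> C}"
  have N: "DG_submodule D G M \<phi> N"
    unfolding N_def using DG_submodule_core[OF submodule_set_add[OF B_sub C(1)]] .
  have "B \<subseteq> N"
    using B submoduleE(1)[OF B_sub] submodule_set_add_upper(1)[OF B_sub C(1)]
    unfolding N_def DG_submodule_def by blast
  moreover have "a \<in> N" using a(1) orbit unfolding N_def by blast
  ultimately have "N = carrier M"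
    using simple N a(2) unfolding simple_DG_quotient_def N_def by blast
  then have "carrier M \<subseteq> B <+>\<^bsub>M\<^esub> C"
    unfolding N_def using act_one G.one_closed by (metis (no_types, lifting) mem_Collect_eq subsetI)
  with C show ?thesis by blast
qed

lemma DG_complement_of_projection:
  assumes B: "submodule B D M" and p: "linear_projection B p" and eq: "equivariant p"
  shows "\<exists>K. DG_submodule D G M \<phi> K \<and> B \<inter> K = {\<zero>\<^bsub>M\<^esub>} \<and>
    carrier M = {b \<oplus>\<^bsub>M\<^esub> k | b k. b \<in> B \<and> k \<in> K}"
proof -
  have lin: "linear_endomorphism p" and into_B: "p ` carrier M \<subseteq> B" and fixes_B: "\<And>b. b \<in> B \<Longrightarrow> p b = b"
    using p unfolding linear_projection_def by auto
  have B_carr: "B \<subseteq> carrier M" using submoduleE(1)[OF B] .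
  define K where "K = {x \<in> carrier M. p x = \<zero>\<^bsub>M\<^esub>}"
  have K: "DG_submodule D G M \<phi> K" unfolding K_def using DG_submodule_kernel[OF lin eq] .
  have "B \<inter> K = {\<zero>\<^bsub>M\<^esub>}"
    using fixes_B submodule_zero_closed[OF B] linear_endomorphism_zero[OF lin] unfolding K_def by auto
  moreover have "x \<in> {b \<oplus>\<^bsub>M\<^esub> k | b k. b \<in> B \<and> k \<in> K}" if x: "x \<in> carrier M" for x
  proof -
    have px: "p x \<in> B" "p x \<in> carrier M" using x into_B B_carr by auto
    have "p (\<ominus>\<^bsub>M\<^esub> p x \<oplus>\<^bsub>M\<^esub> x) = \<zero>\<^bsub>M\<^esub>"
      using x px fixes_B linear_endomorphism_add[OF lin] linear_endomorphism_minus[OF lin]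
      by (simp add: linear_endomorphism_closed[OF lin] M.l_neg)
    then have "\<ominus>\<^bsub>M\<^esub> p x \<oplus>\<^bsub>M\<^esub> x \<in> K" unfolding K_def using x px by simp
    moreover have "x = p x \<oplus>\<^bsub>M\<^esub> (\<ominus>\<^bsub>M\<^esub> p x \<oplus>\<^bsub>M\<^esub> x)" using x px by (simp add: M.r_neg2)
    ultimately show ?thesis using px(1) by blast
  qed
  moreover have "{b \<oplus>\<^bsub>M\<^esub> k | b k. b \<in> B \<and> k \<in> K} \<subseteq> carrier M"
    using B_carr unfolding K_def by auto
  ultimately show ?thesis using K by blast
qed

end

section \<open>Averaging over the group\<close>

context dg_module
begin

definition conjugate_sum :: "('m \<Rightarrow> 'm) \<Rightarrow> 'm \<Rightarrow> 'm" where
  "conjugate_sum p x = (\<Oplus>\<^bsub>M\<^esub>g\<in>carrier G. \<phi> g (p (\<phi> (inv\<^bsub>G\<^esub> g) x)))"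

context
  fixes p assumes p: "p \<in> carrier M \<rightarrow> carrier M"
begin

lemma conjugate_term_closed:
  "x \<in> carrier M \<Longrightarrow> (\<lambda>g. \<phi> g (p (\<phi> (inv\<^bsub>G\<^esub> g) x))) \<in> carrier G \<rightarrow> carrier M"
  using p by (simp add: Pi_iff)

lemma conjugate_sum_equivariant:
  assumes fin: "finite (carrier G)"
  shows "equivariant (conjugate_sum p)"
  unfolding equivariant_def
proof (intro ballI)
  fix h x assume h: "h \<in> carrier G" and x: "x \<in> carrier M"
  have hx: "\<phi> h x \<in> carrier M" using h x by simp
  \<comment> \<open>substitute g = h k in the sum\<close>
  have "conjugate_sum p (\<phi> h x) =
      (\<Oplus>\<^bsub>M\<^esub>k\<in>carrier G. \<phi> (h \<otimes>\<^bsub>G\<^esub> k) (p (\<phi> (inv\<^bsub>G\<^esub> (h \<otimes>\<^bsub>G\<^esub> k)) (\<phi> h x))))"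
    unfolding conjugate_sum_def
    using M.add.finprod_reindex[OF _ G.inj_on_cmult[OF h]] conjugate_term_closed[OF hx]
    by (simp add: G.surj_const_mult[OF h])
  also have "\<dots> = (\<Oplus>\<^bsub>M\<^esub>k\<in>carrier G. \<phi> h (\<phi> k (p (\<phi> (inv\<^bsub>G\<^esub> k) x))))"
  proof (rule M.finsum_cong')
    fix k assume k: "k \<in> carrier G"
    have "\<phi> (inv\<^bsub>G\<^esub> (h \<otimes>\<^bsub>G\<^esub> k)) (\<phi> h x) = \<phi> (inv\<^bsub>G\<^esub> k) x"
      using h k x by (simp add: G.inv_mult_group act_mult)
    then show "\<phi> (h \<otimes>\<^bsub>G\<^esub> k) (p (\<phi> (inv\<^bsub>G\<^esub> (h \<otimes>\<^bsub>G\<^esub> k)) (\<phi> h x))) =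
        \<phi> h (\<phi> k (p (\<phi> (inv\<^bsub>G\<^esub> k) x)))"
      using h k x by (simp add: act_mult funcset_mem[OF p])
  qed (use h x in \<open>simp_all add: Pi_iff funcset_mem[OF p]\<close>)
  also have "\<dots> = \<phi> h (conjugate_sum p x)"
    unfolding conjugate_sum_def using act_finsum[OF h fin conjugate_term_closed[OF x]] by simp
  finally show "conjugate_sum p (\<phi> h x) = \<phi> h (conjugate_sum p x)" .
qed

end

lemma conjugate_sum_linear:
  assumes fin: "finite (carrier G)" and lin: "linear_endomorphism p"
  shows "linear_endomorphism (conjugate_sum p)"
proof -
  have p: "p \<in> carrier M \<rightarrow> carrier M" using linear_endomorphism_closed[OF lin] by blast
  note terms = conjugate_term_closed[OF p]
  have "conjugate_sum p x \<in> carrier M" if "x \<in> carrier M" for x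
    unfolding conjugate_sum_def using terms[OF that] by simp
  moreover have "conjugate_sum p (x \<oplus>\<^bsub>M\<^esub> y) = conjugate_sum p x \<oplus>\<^bsub>M\<^esub> conjugate_sum p y"
    if x: "x \<in> carrier M" and y: "y \<in> carrier M" for x y
  proof -
    have "conjugate_sum p (x \<oplus>\<^bsub>M\<^esub> y) = (\<Oplus>\<^bsub>M\<^esub>g\<in>carrier G.
        \<phi> g (p (\<phi> (inv\<^bsub>G\<^esub> g) x)) \<oplus>\<^bsub>M\<^esub> \<phi> g (p (\<phi> (inv\<^bsub>G\<^esub> g) y)))"
      unfolding conjugate_sum_def using x y
      by (intro M.finsum_cong')
        (simp_all add: act_add linear_endomorphism_add[OF lin] funcset_mem[OF p] Pi_iff)
    also have "\<dots> = conjugate_sum p x \<oplus>\<^bsub>M\<^esub> conjugate_sum p y"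
      unfolding conjugate_sum_def using terms[OF x] terms[OF y] by (rule M.finsum_addf)
    finally show ?thesis .
  qed
  moreover have "conjugate_sum p (a \<odot>\<^bsub>M\<^esub> x) = a \<odot>\<^bsub>M\<^esub> conjugate_sum p x"
    if a: "a \<in> carrier D" and x: "x \<in> carrier M" for a x
  proof -
    have "conjugate_sum p (a \<odot>\<^bsub>M\<^esub> x) =
        (\<Oplus>\<^bsub>M\<^esub>g\<in>carrier G. a \<odot>\<^bsub>M\<^esub> \<phi> g (p (\<phi> (inv\<^bsub>G\<^esub> g) x)))"
      unfolding conjugate_sum_def using a x
      by (intro M.finsum_cong')
        (simp_all add: act_smult linear_endomorphism_smult[OF lin] funcset_mem[OF p] Pi_iff)
    also have "\<dots> = a \<odot>\<^bsub>M\<^esub> conjugate_sum p x"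
      unfolding conjugate_sum_def using finsum_smult_ldistr[OF fin a terms[OF x]] by simp
    finally show ?thesis .
  qed
  ultimately show ?thesis unfolding linear_endomorphism_def by blast
qed

lemma maschke_projection:
  assumes fin: "finite (carrier G)"
    and d: "d \<in> carrier D" "\<And>x. x \<in> carrier M \<Longrightarrow> d \<odot>\<^bsub>M\<^esub> ([card (carrier G)] \<cdot>\<^bsub>M\<^esub> x) = x"
    and B: "DG_submodule D G M \<phi> B" and p: "linear_projection B p"
  shows "linear_projection B (\<lambda>x. d \<odot>\<^bsub>M\<^esub> conjugate_sum p x)"
    and "equivariant (\<lambda>x. d \<odot>\<^bsub>M\<^esub> conjugate_sum p x)"
proof -
  have lin: "linear_endomorphism p" and into_B: "p ` carrier M \<subseteq> B" and fixes_B: "\<And>b. b \<in> B \<Longrightarrow> p b = b"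
    using p unfolding linear_projection_def by auto
  have B_sub: "submodule B D M" and B_inv: "\<And>g b. g \<in> carrier G \<Longrightarrow> b \<in> B \<Longrightarrow> \<phi> g b \<in> B"
    using B unfolding DG_submodule_def by auto
  have p_carr: "p \<in> carrier M \<rightarrow> carrier M" using linear_endomorphism_closed[OF lin] by blast
  have "conjugate_sum p x \<in> B" if "x \<in> carrier M" for x
    unfolding conjugate_sum_def using that into_B
    by (intro submodule_finsum_closed[OF B_sub fin]) (simp add: B_inv image_subset_iff)
  then have "d \<odot>\<^bsub>M\<^esub> conjugate_sum p x \<in> B" if "x \<in> carrier M" for x
    using that d(1) submoduleE(4)[OF B_sub] by blast
  moreover have "d \<odot>\<^bsub>M\<^esub> conjugate_sum p b = b" if b: "b \<in> B" for b
  proof -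
    have b_carr: "b \<in> carrier M" using b submoduleE(1)[OF B_sub] by blast
    have "conjugate_sum p b = (\<Oplus>\<^bsub>M\<^esub>g\<in>carrier G. b)"
      unfolding conjugate_sum_def using b b_carr
      by (intro M.finsum_cong') (simp_all add: B_inv fixes_B)
    also have "\<dots> = [card (carrier G)] \<cdot>\<^bsub>M\<^esub> b" using M.add.finprod_const[OF b_carr] by blast
    finally show ?thesis using d(2)[OF b_carr] by simp
  qed
  moreover have "linear_endomorphism (\<lambda>x. d \<odot>\<^bsub>M\<^esub> conjugate_sum p x)"
    using linear_endomorphism_scale[OF conjugate_sum_linear[OF fin lin] d(1)] .
  ultimately show "linear_projection B (\<lambda>x. d \<odot>\<^bsub>M\<^esub> conjugate_sum p x)"
    unfolding linear_projection_def by blast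
  show "equivariant (\<lambda>x. d \<odot>\<^bsub>M\<^esub> conjugate_sum p x)"
    using conjugate_sum_equivariant[OF p_carr fin] d(1)
      linear_endomorphism_closed[OF conjugate_sum_linear[OF fin lin]]
    unfolding equivariant_def by (simp add: act_smult)
qed

end

theorem lemma7:
  fixes D :: "('d, 'e) ring_scheme" and G :: "('g, 'h) monoid_scheme"
    and M :: "('d, 'm) module" and \<phi> :: "'g \<Rightarrow> 'm \<Rightarrow> 'm"
    and B :: "'m set" and L :: "'l set" and Bf :: "'l \<Rightarrow> 'm set" and P :: "'d set"
  assumes "finite (carrier G)"
    and "dedekind_domain D"
    and "DG_module D G M \<phi>"
    and "DG_submodule D G M \<phi> B"
    and "internal_direct_sum M L Bf B"
    and "\<forall>l \<in> L. simple_DG_submodule D G M \<phi> (Bf l)"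
    and "simple_DG_quotient D G M \<phi> B"
    and "\<forall>l \<in> L. \<not> quotient_DG_iso D G M \<phi> B (Bf l)"
    and "ann D M B = P" and "ann_quot D M B = P"
    and "maximalideal P D"
    and "char_zero_ring (D Quot P)"
  shows "\<exists>K. DG_submodule D G M \<phi> K \<and> B \<inter> K = {\<zero>\<^bsub>M\<^esub>} \<and>
             carrier M = {b \<oplus>\<^bsub>M\<^esub> k | b k. b \<in> B \<and> k \<in> K}"
proof -
  interpret dg_module D M G \<phi> using assms(3) by (rule dg_moduleI)
  have B: "submodule B D M" using assms(4) unfolding DG_submodule_def by blast
  have "p \<odot>\<^bsub>M\<^esub> x = \<zero>\<^bsub>M\<^esub>" if "p \<in> P" "x \<in> carrier M" for p x
    using smult_zero_if_kills_sub_and_quot[OF assms(4-8)] that assms(9,10)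
    unfolding ann_def ann_quot_def by blast
  then have res: "residue_module D M P"
    using module_axioms assms(11) by (intro residue_module.intro residue_module_axioms.intro)
  then interpret residue_module D M P .
  obtain C where "submodule C D M" "B \<inter> C = {\<zero>\<^bsub>M\<^esub>}" "carrier M \<subseteq> B <+>\<^bsub>M\<^esub> C"
    using linear_complement_if_simple_quotient[OF assms(1) res assms(4,7)] by blast
  then obtain p where p: "linear_projection B p" using linear_projection_of_complement[OF B] by blast
  have "card (carrier G) > 0" using assms(1) G.one_closed card_gt_0_iff by blast
  then have "[card (carrier G)] \<cdot>\<^bsub>D\<^esub> \<one>\<^bsub>D\<^esub> \<notin> P"
    using add_pow_one_notin_ideal[OF maximalideal.axioms(1)[OF assms(11)] assms(12)] by blast
  then obtain d where d: "d \<in> carrier D" "\<And>x. x \<in> carrier M \<Longrightarrow> d \<odot>\<^bsub>M\<^esub> ([card (carrier G)] \<cdot>\<^bsub>M\<^esub> x) = x"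
    using smult_invertible[of "[card (carrier G)] \<cdot>\<^bsub>D\<^esub> \<one>\<^bsub>D\<^esub>"] by (auto simp: smult_add_pow_one)
  show ?thesis
    using DG_complement_of_projection[OF B maschke_projection[OF assms(1) d assms(4) p]] .
qed

end
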